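(* Let $\Bbbk$ be a field, $R=\Bbbk[x_1,\dots,x_m]$ with the standard $\mathbb Z^m$-grading, $L$ a Noetherian multigraded $R$-module with minimal multihomogeneous free presentation $E\xrightarrow{\Phi}G\to L\to 0$, and $S$ a multihomogeneous basis of $E$. Let $\alpha$ be a generic element of $\Lambda(L)$ and let $\omega$ be a total ordering of $I_\alpha$. Then for all $i$, \[ \dim_\Bbbk H_i(V(\alpha,\phi,\omega)_\bullet)=\begin{cases}\beta(\mathbf M_\alpha) & \text{if } i=|I_\alpha|-r(\mathbf M_\alpha),\\ 0&\text{otherwise.}\end{cases} \]
   Context: For nonempty $A\subseteq S$ let $\deg A\in\mathbb Z^m$ be the componentwise maximum of the multidegrees of the elements of $A$; $\Lambda(L)=\{\deg A:\emptyset\ne A\subseteq S\}$. An element $\alpha\in\Lambda(L)$ is generic if $\{A\subseteq S:\deg A=\alpha\}$ is a closed interval $\{A: I_\alpha\subseteq A\subseteq I^\alpha\}$ of the Boolean lattice of subsets of $S$; set $I(\alpha)=I^\alpha\setminus I_\alpha$. Regard $\Bbbk$ as an $R$-module via $x_i\mapsto 1$, let $W=G\otimes_R\Bbbk$, let $U_S$ be the $\Bbbk$-space with basis $\{e_a:a\in S\}$ identified with $E\otimes_R\Bbbk$ via $e_a=a\otimes1$, and $\phi=\Phi\otimes_R\Bbbk\colon U_S\to W$. For $B\subseteq S$ put $V_B=\phi(\operatorname{span}\{e_a:a\in B\})$. The matroid $\mathbf M_\alpha$ on $I_\alpha$ is the one represented by the composite $\operatorname{span}\{e_a:a\in I_\alpha\}\xrightarrow{\phi}W\to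 W/V_{I(\alpha)}$ (equivalently, the contraction of the restriction of $\mathbf M(\phi)$ to $I^\alpha$ by $I(\alpha)$); its rank is $r(\mathbf M_\alpha)=\dim V_{I^\alpha}-\dim V_{I(\alpha)}$ and its rank function is $r_\alpha(J)=\dim V_{I(\alpha)\cup J}-\dim V_{I(\alpha)}$. Its $\beta$-invariant is $\beta(\mathbf M_\alpha)=(-1)^{r_\alpha(I_\alpha)}\sum_{J\subseteq I_\alpha}(-1)^{|J|}r_\alpha(J)$. Subsets of $I_\alpha$ are identified with increasing sequences with respect to $\omega$. The complex $V(\alpha,\phi,\omega)_\bullet$ has $V(\alpha,\phi,\omega)_i=\bigoplus_{A\subseteq I_\alpha,\ |A|=i}V_{I^\alpha\setminus A}$ for $0\le i\le|I_\alpha|$, and its differential has, for $A\subseteq I_\alpha$ and $c\in I_\alpha\setminus A$, component $V_{I^\alpha\setminus(A\cup\{c\})}\to V_{I^\alpha\setminus A}$ equal to the inclusion times the sign of the permutation sorting $(c,I_\alpha\setminus(A\cup\{c\}))$ into increasing order (other components zero). *)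

theory Defs
  imports Complex_Main "HOL-Library.Function_Algebras"
begin

text \<open>Multidegrees in Z^m are functions nat => int vanishing outside {0..<m}.
  The degree of a nonempty finite set A of basis elements is the
  componentwise maximum of the multidegrees of its elements.\<close>

definition mdeg_set :: "('s \<Rightarrow> nat \<Rightarrow> int) \<Rightarrow> 's set \<Rightarrow> nat \<Rightarrow> int" where
  "mdeg_set d A = (\<lambda>i. Max ((\<lambda>a. d a i) ` A))"

definition Lambda :: "'s set \<Rightarrow> ('s \<Rightarrow> nat \<Rightarrow> int) \<Rightarrow> (nat \<Rightarrow> int) set" where
  "Lambda S d = mdeg_set d ` {A. A \<subseteq> S \<and> A \<noteq> {}}"

definition fibre :: "'s set \<Rightarrow> ('s \<Rightarrow> nat \<Rightarrow> int) \<Rightarrow> (nat \<Rightarrow> int) \<Rightarrow> 's set set" where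
  "fibre S d \<alpha> = {A. A \<subseteq> S \<and> A \<noteq> {} \<and> mdeg_set d A = \<alpha>}"

text \<open>alpha is generic with interval endpoints Il (= I_alpha) and Iu (= I^alpha).\<close>
definition generic_with :: "'s set \<Rightarrow> ('s \<Rightarrow> nat \<Rightarrow> int) \<Rightarrow> (nat \<Rightarrow> int) \<Rightarrow> 's set \<Rightarrow> 's set \<Rightarrow> bool" where
  "generic_with S d \<alpha> Il Iu \<longleftrightarrow> \<alpha> \<in> Lambda S d \<and> fibre S d \<alpha> = {A. Il \<subseteq> A \<and> A \<subseteq> Iu}"

text \<open>R = k[x_0..x_{m-1}], Z^m-graded.  G is free on a finite homogeneous basis Gb
  (multidegrees dG), E is free on the finite homogeneous basis S (multidegrees dS),
  and L = coker Phi.  A multihomogeneous (degree-preserving) R-linear map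
  Phi : E -> G is Phi(e_a) = sum_g c g a * x^(dS a - dG g) * e_g, where
  c g a \<noteq> 0 only if dG g \<le> dS a (multihomogeneous polynomials of degree
  v in the standard grading are scalar multiples of the monomial x^v).
  Specialising x_i |-> 1 gives phi(e_a) = (c g a)_g in W = k^Gb.\<close>

definition sW :: "'k::field \<Rightarrow> ('g \<Rightarrow> 'k) \<Rightarrow> ('g \<Rightarrow> 'k)" where
  "sW a v = (\<lambda>g. a * v g)"

definition phi_vec :: "'g set \<Rightarrow> ('g \<Rightarrow> 's \<Rightarrow> 'k::field) \<Rightarrow> 's \<Rightarrow> 'g \<Rightarrow> 'k" where
  "phi_vec Gb c a = (\<lambda>g. if g \<in> Gb then c g a else 0)"

text \<open>Minimality: (1) Phi(E) \<subseteq> mG, i.e. no entry of Phi is a nonzero constant;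
  (2) ker Phi \<subseteq> mE, i.e. (graded Nakayama) no Phi(e_a) lies in the R-span of the
  Phi(e_b), b \<noteq> a; comparing homogeneous components of degree dS a, this says
  phi(e_a) is not in the k-span of the phi(e_b) with b \<noteq> a, dS b \<le> dS a.\<close>
definition min_mh_presentation ::
  "nat \<Rightarrow> 'g set \<Rightarrow> ('g \<Rightarrow> nat \<Rightarrow> int) \<Rightarrow> 's set \<Rightarrow> ('s \<Rightarrow> nat \<Rightarrow> int) \<Rightarrow> ('g \<Rightarrow> 's \<Rightarrow> 'k::field) \<Rightarrow> bool" where
  "min_mh_presentation m Gb dG S dS c \<longleftrightarrow>
     finite Gb \<and> finite S \<and>
     (\<forall>g i. m \<le> i \<longrightarrow> dG g i = 0) \<and> (\<forall>a i. m \<le> i \<longrightarrow> dS a i = 0) \<and>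
     (\<forall>g\<in>Gb. \<forall>a\<in>S. c g a \<noteq> 0 \<longrightarrow> dG g \<le> dS a) \<and>
     (\<forall>g\<in>Gb. \<forall>a\<in>S. c g a \<noteq> 0 \<longrightarrow> dG g \<noteq> dS a) \<and>
     (\<forall>a\<in>S. phi_vec Gb c a \<notin>
        Modules.module.span sW (phi_vec Gb c ` {b \<in> S. b \<noteq> a \<and> dS b \<le> dS a}))"

definition VB :: "'g set \<Rightarrow> ('g \<Rightarrow> 's \<Rightarrow> 'k::field) \<Rightarrow> 's set \<Rightarrow> ('g \<Rightarrow> 'k) set" where
  "VB Gb c B = Modules.module.span sW (phi_vec Gb c ` B)"

definition dimW :: "('g \<Rightarrow> 'k::field) set \<Rightarrow> nat" where
  "dimW V = Vector_Spaces.vector_space.dim sW V"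

text \<open>rank function r_alpha(J) = dim V_{I(alpha) \<union> J} - dim V_{I(alpha)}, I(alpha) = Iu - Il\<close>
definition rank_alpha :: "'g set \<Rightarrow> ('g \<Rightarrow> 's \<Rightarrow> 'k::field) \<Rightarrow> 's set \<Rightarrow> 's set \<Rightarrow> 's set \<Rightarrow> int" where
  "rank_alpha Gb c Il Iu J =
     int (dimW (VB Gb c ((Iu - Il) \<union> J))) - int (dimW (VB Gb c (Iu - Il)))"

definition beta_alpha :: "'g set \<Rightarrow> ('g \<Rightarrow> 's \<Rightarrow> 'k::field) \<Rightarrow> 's set \<Rightarrow> 's set \<Rightarrow> int" where
  "beta_alpha Gb c Il Iu =
     (-1) ^ nat (rank_alpha Gb c Il Iu Il) *
     (\<Sum>J\<in>Pow Il. (-1) ^ card J * rank_alpha Gb c Il Iu J)"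

definition inc_seq :: "'s rel \<Rightarrow> 's set \<Rightarrow> 's list" where
  "inc_seq \<omega> B = (THE xs. set xs = B \<and> distinct xs \<and> sorted_wrt (\<lambda>x y. (x, y) \<in> \<omega>) xs)"

definition inversions :: "'s rel \<Rightarrow> 's list \<Rightarrow> nat" where
  "inversions \<omega> xs = card {(i, j). i < j \<and> j < length xs \<and> (xs ! j, xs ! i) \<in> \<omega> \<and> xs ! i \<noteq> xs ! j}"

definition sort_sign :: "'s rel \<Rightarrow> 's list \<Rightarrow> 'k::field" where
  "sort_sign \<omega> xs = (-1) ^ inversions \<omega> xs"

text \<open>Elements of V_i = \<oplus>_{A \<subseteq> Il, |A| = i} V_{Iu - A}, as families indexed by subsets.\<close>
definition sC :: "'k::field \<Rightarrow> ('s set \<Rightarrow> 'g \<Rightarrow> 'k) \<Rightarrow> ('s set \<Rightarrow> 'g \<Rightarrow> 'k)" where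
  "sC a x = (\<lambda>A g. a * x A g)"

definition cpx :: "'g set \<Rightarrow> ('g \<Rightarrow> 's \<Rightarrow> 'k::field) \<Rightarrow> 's set \<Rightarrow> 's set \<Rightarrow> nat \<Rightarrow> ('s set \<Rightarrow> 'g \<Rightarrow> 'k) set" where
  "cpx Gb c Il Iu i =
     {x. \<forall>A. (A \<subseteq> Il \<and> card A = i \<longrightarrow> x A \<in> VB Gb c (Iu - A)) \<and>
            (\<not> (A \<subseteq> Il \<and> card A = i) \<longrightarrow> x A = (\<lambda>g. 0))}"

definition cpx_d :: "'s rel \<Rightarrow> 's set \<Rightarrow> ('s set \<Rightarrow> 'g \<Rightarrow> 'k::field) \<Rightarrow> ('s set \<Rightarrow> 'g \<Rightarrow> 'k)" where
  "cpx_d \<omega> Il x = (\<lambda>A g. \<Sum>e\<in>Il - A.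
       sort_sign \<omega> (e # inc_seq \<omega> (Il - insert e A)) * x (insert e A) g)"

definition dimC :: "('s set \<Rightarrow> 'g \<Rightarrow> 'k::field) set \<Rightarrow> nat" where
  "dimC V = Vector_Spaces.vector_space.dim sC V"

definition homology_dim :: "'g set \<Rightarrow> ('g \<Rightarrow> 's \<Rightarrow> 'k::field) \<Rightarrow> 's set \<Rightarrow> 's set \<Rightarrow> 's rel \<Rightarrow> nat \<Rightarrow> int" where
  "homology_dim Gb c Il Iu \<omega> i =
     int (dimC {x \<in> cpx Gb c Il Iu i. cpx_d \<omega> Il x = (\<lambda>A g. 0)})
     - int (dimC (cpx_d \<omega> Il ` cpx Gb c Il Iu (Suc i)))"

end

theory Submission
  imports Defs
begin

text \<open>Write \<open>E = I\<^sub>\<alpha>\<close>, \<open>X = \<phi>(I(\<alpha>))\<close> and \<open>v = \<phi>\<close>, so that \<open>V\<^sub>i\<close> is the direct sum over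
  the \<open>i\<close>-subsets \<open>A \<subseteq> E\<close> of \<open>span (X \<union> v(E - A))\<close>. Only the matroid of \<open>v\<close> over \<open>X\<close>
  matters: of the hypotheses on the presentation and on \<open>\<alpha>\<close> we need only that \<open>E\<close> is finite
  and nonempty.
  The complex is exact outside degree \<open>p = |E| - r\<close>, by induction on \<open>|E|\<close> using the
  \<open>\<omega>\<close>-largest element \<open>m\<close>. If \<open>m\<close> is a loop, coning with \<open>m\<close> is a contracting homotopy.
  If \<open>m\<close> is a coloop, the \<open>v m\<close>-coordinates of a cycle form a cycle of the acyclic complex of
  the simplex on \<open>E - {m}\<close>, and what remains is killed by coning. Otherwise the faces through
  \<open>m\<close> carry the complex of the deletion shifted by one and the other faces that of the
  contraction, both exact by induction.
  With the homology concentrated in degree \<open>p\<close>, its dimension is \<open>\<plusminus>\<close> the Euler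
  characteristic \<open>\<Sum> (-1)\<^sup>i dim V\<^sub>i\<close>, which inclusion-exclusion turns into
  \<open>\<plusminus>\<Sum>\<^sub>J (-1)\<^bsup>|J|\<^esup> r\<^sub>\<alpha>(J) = \<beta>(M\<^sub>\<alpha>)\<close>.\<close>

lemma linear_order_on_antisymD:
  "linear_order_on D \<omega> \<Longrightarrow> (a, b) \<in> \<omega> \<Longrightarrow> (b, a) \<in> \<omega> \<Longrightarrow> a = b"
  unfolding linear_order_on_def partial_order_on_def antisym_def by blast

lemma linear_order_on_totalD:
  "linear_order_on D \<omega> \<Longrightarrow> a \<in> D \<Longrightarrow> b \<in> D \<Longrightarrow> a \<noteq> b \<Longrightarrow> (a, b) \<in> \<omega> \<or> (b, a) \<in> \<omega>"
  unfolding linear_order_on_def total_on_def by blast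

lemma linear_order_on_reflD: "linear_order_on D \<omega> \<Longrightarrow> a \<in> D \<Longrightarrow> (a, a) \<in> \<omega>"
  unfolding linear_order_on_def partial_order_on_def preorder_on_def refl_on_def by blast

lemma linear_order_on_transD:
  "linear_order_on D \<omega> \<Longrightarrow> (a, b) \<in> \<omega> \<Longrightarrow> (b, c) \<in> \<omega> \<Longrightarrow> (a, c) \<in> \<omega>"
  unfolding linear_order_on_def partial_order_on_def preorder_on_def trans_def by blast

lemma linear_order_on_finite_has_greatest:
  assumes lo: "linear_order_on D \<omega>" and "finite E" "E \<noteq> {}" "E \<subseteq> D"
  obtains m where "m \<in> E" "\<forall>b\<in>E. (b, m) \<in> \<omega>"
proof -
  have "\<exists>m\<in>E. \<forall>b\<in>E. (b, m) \<in> \<omega>"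
    using assms(2-4)
  proof (induction E rule: finite_ne_induct)
    case (singleton x)
    then show ?case using linear_order_on_reflD[OF lo] by auto
  next
    case (insert x F)
    then obtain m where m: "m \<in> F" "\<forall>b\<in>F. (b, m) \<in> \<omega>" by auto
    show ?case
    proof (cases "(x, m) \<in> \<omega>")
      case True
      then show ?thesis using m by auto
    next
      case False
      then have "(m, x) \<in> \<omega>" using linear_order_on_totalD[OF lo, of x m] insert m by auto
      then show ?thesis
        using m linear_order_on_transD[OF lo] linear_order_on_reflD[OF lo] insert by blast
    qed
  qed
  then show ?thesis using that by blast
qed

lemma linear_order_on_finite_has_least:
  assumes "linear_order_on D \<omega>" "finite E" "E \<noteq> {}" "E \<subseteq> D"
  obtains m where "m \<in> E" "\<forall>b\<in>E. (m, b) \<in> \<omega>"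
  using linear_order_on_finite_has_greatest[of D "\<omega>\<inverse>" E] assms by auto

section \<open>Dimension counting without finite-dimensionality\<close>

context vector_space
begin

lemma dim_insert_of_finite:
  assumes fin: "finite S"
  shows "dim (insert x S) = (if x \<in> span S then dim S else Suc (dim S))"
proof (cases "x \<in> span S")
  case True
  then show ?thesis by (metis dim_span span_redundant)
next
  case False
  obtain B where B: "B \<subseteq> span S" "independent B" "span S \<subseteq> span B" "card B = dim (span S)"
    using basis_exists [of "span S"] by blast
  have finB: "finite B" using independent_span_bound[OF fin B(2) B(1)] by simp
  have "dim (span (insert x S)) = Suc (dim S)"
  proof (rule dim_unique)
    show "insert x B \<subseteq> span (insert x S)"
      by (meson B(1) insertI1 insert_subset order_trans span_base span_mono subset_insertI)
    show "span (insert x S) \<subseteq> span (insert x B)"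
      by (metis B(1) B(3) span_breakdown_eq span_subspace subsetI subspace_span)
    show "independent (insert x B)"
      by (metis B(1-3) independent_insert span_subspace subspace_span False)
    show "card (insert x B) = Suc (dim S)"
      using B False finB by (metis dim_span span_base card_insert_disjoint subset_iff)
  qed
  then show ?thesis by (metis False dim_span)
qed

end

context vector_space_pair
begin

text \<open>Rank-nullity; the library version assumes a finite-dimensional ambient space.\<close>

lemma dim_eq_dim_kernel_add_dim_image:
  assumes lin: "Vector_Spaces.linear s1 s2 f" and sub: "vs1.subspace V"
    and fin: "finite F" "V \<subseteq> vs1.span F"
  shows "vs1.dim V = vs1.dim {x\<in>V. f x = 0} + vs2.dim (f ` V)"
proof -
  let ?N = "{x\<in>V. f x = 0}"
  obtain K where K: "K \<subseteq> ?N" "vs1.independent K" "?N \<subseteq> vs1.span K" "card K = vs1.dim ?N"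
    by (rule vs1.basis_exists)
  obtain B where B: "K \<subseteq> B" "B \<subseteq> V" "vs1.independent B" "V \<subseteq> vs1.span B"
    using vs1.maximal_independent_subset_extend[of K V] K by auto
  have finB: "finite B" using vs1.independent_span_bound[OF fin(1) B(3)] B(2) fin(2) by auto
  have finK: "finite K" using finB B(1) finite_subset by auto
  define C where "C = B - K"
  have finC: "finite C" using finB C_def by auto
  have fK: "\<forall>k\<in>K. f k = 0" using K(1) by auto
  have C_indep: "\<forall>c\<in>t. u c = 0" if t: "finite t" "t \<subseteq> C" and s: "(\<Sum>c\<in>t. u c *b f c) = 0" for t u
  proof -
    define x where "x = (\<Sum>c\<in>t. u c *a c)"
    have fx: "f x = 0" using s by (simp add: x_def linear_sum[OF lin] linear_scale[OF lin])
    have "x \<in> V" unfolding x_def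
      by (rule vs1.subspace_sum[OF sub]) (use t B(2) C_def vs1.subspace_scale[OF sub] in auto)
    with fx K(3) have "x \<in> vs1.span K" by auto
    then obtain w where w: "(\<Sum>k\<in>K. w k *a k) = x"
      using vs1.span_finite[OF finK] by auto
    define u' where "u' v = (if v \<in> t then u v else - w v)" for v
    have disj: "t \<inter> K = {}" using t C_def by auto
    have "(\<Sum>v\<in>t \<union> K. u' v *a v) = (\<Sum>v\<in>t. u' v *a v) + (\<Sum>v\<in>K. u' v *a v)"
      by (rule sum.union_disjoint) (use t finK disj in auto)
    also have "(\<Sum>v\<in>t. u' v *a v) = x" unfolding x_def by (rule sum.cong) (auto simp: u'_def)
    also have "(\<Sum>v\<in>K. u' v *a v) = (\<Sum>v\<in>K. - (w v *a v))"
      by (rule sum.cong) (use disj in \<open>auto simp: u'_def\<close>)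
    also have "\<dots> = - x" using w by (simp add: sum_negf)
    finally have z: "(\<Sum>v\<in>t \<union> K. u' v *a v) = 0" by simp
    have "\<forall>v\<in>t \<union> K. u' v = 0"
    proof (rule ccontr)
      assume "\<not> ?thesis"
      then have "vs1.dependent B"
        unfolding vs1.dependent_explicit
        by (intro exI[of _ "t \<union> K"] exI[of _ u']) (use t finK z B(1) C_def in auto)
      with B(3) show False by simp
    qed
    then show ?thesis by (metis UnI1 u'_def)
  qed
  have inj: "inj_on f C"
  proof (rule inj_onI, rule ccontr)
    fix c1 c2 assume c: "c1 \<in> C" "c2 \<in> C" "f c1 = f c2" "c1 \<noteq> c2"
    define u :: "'b \<Rightarrow> 'a" where "u v = (if v = c1 then 1 else -1)" for v
    have "(\<Sum>c\<in>{c1,c2}. u c *b f c) = 0" using c by (simp add: u_def)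
    from C_indep[OF _ _ this] c show False by (auto simp: u_def)
  qed
  have indep: "vs2.independent (f ` C)"
  proof
    assume "vs2.dependent (f ` C)"
    then obtain t u where tu: "finite t" "t \<subseteq> f ` C" "(\<Sum>v\<in>t. u v *b v) = 0" "\<exists>v\<in>t. u v \<noteq> 0"
      unfolding vs2.dependent_explicit by blast
    define t' where "t' = C \<inter> f -` t"
    have tt': "t = f ` t'" using tu(2) t'_def by auto
    have inj': "inj_on f t'" using inj t'_def by (auto intro: inj_on_subset)
    have "(\<Sum>c\<in>t'. u (f c) *b f c) = 0" using tu(3) unfolding tt' sum.reindex[OF inj'] by simp
    from C_indep[OF _ _ this] have "\<forall>c\<in>t'. u (f c) = 0" using finC t'_def by auto
    with tu(4) tt' show False by auto
  qed
  have spanf: "f ` V \<subseteq> vs2.span (f ` C)"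
  proof -
    have "f ` V \<subseteq> f ` vs1.span B" using B(4) by auto
    also have "\<dots> = vs2.span (f ` B)" by (simp add: linear_span_image[OF lin])
    also have "\<dots> \<subseteq> vs2.span (insert 0 (f ` C))"
      by (rule vs2.span_mono) (use fK C_def in auto)
    finally show ?thesis by simp
  qed
  have "vs2.dim (f ` V) = card (f ` C)"
    by (rule vs2.dim_unique[OF _ spanf indep refl]) (use B(2) C_def in auto)
  also have "\<dots> = card C" using card_image[OF inj] .
  finally have "vs2.dim (f ` V) = card C" .
  moreover have "card B = card K + card C"
    using card_Diff_subset[OF finK B(1)] card_mono[OF finB B(1)] C_def by simp
  moreover have "vs1.dim V = card B" using vs1.basis_card_eq_dim[OF B(2,4,3)] by simp
  ultimately show ?thesis using K(4) by simp
qed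

end

interpretation W: vector_space "sW :: 'k::field \<Rightarrow> ('g \<Rightarrow> 'k) \<Rightarrow> ('g \<Rightarrow> 'k)"
  by unfold_locales (auto simp: sW_def fun_eq_iff algebra_simps)

interpretation C: vector_space "sC :: 'k::field \<Rightarrow> ('s set \<Rightarrow> 'g \<Rightarrow> 'k) \<Rightarrow> ('s set \<Rightarrow> 'g \<Rightarrow> 'k)"
  by unfold_locales (auto simp: sC_def fun_eq_iff algebra_simps)

interpretation CW: vector_space_pair "sC :: 'k::field \<Rightarrow> ('s set \<Rightarrow> 'g \<Rightarrow> 'k) \<Rightarrow> _"
  "sW :: 'k \<Rightarrow> ('g \<Rightarrow> 'k) \<Rightarrow> _" ..
interpretation WC: vector_space_pair "sW :: 'k::field \<Rightarrow> ('g \<Rightarrow> 'k) \<Rightarrow> _"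
  "sC :: 'k \<Rightarrow> ('s set \<Rightarrow> 'g \<Rightarrow> 'k) \<Rightarrow> _" ..
interpretation CC: vector_space_pair "sC :: 'k::field \<Rightarrow> ('s set \<Rightarrow> 'g \<Rightarrow> 'k) \<Rightarrow> _"
  "sC :: 'k \<Rightarrow> ('s set \<Rightarrow> 'g \<Rightarrow> 'k) \<Rightarrow> _" ..

lemma sum_apply: "(\<Sum>a\<in>S. f a) x = (\<Sum>a\<in>S. f a x)"
  by (induct S rule: infinite_finite_induct) auto

lemma sC_apply: "sC a x A = sW a (x A)"
  by (simp add: sC_def sW_def)

lemma C_dim_zero: "C.dim {0} = 0"
  by (rule C.dim_unique[of "{}"]) (auto simp: C.span_zero C.independent_empty)

definition dsum :: "'s set set \<Rightarrow> ('s set \<Rightarrow> ('g \<Rightarrow> 'k::field) set) \<Rightarrow> ('s set \<Rightarrow> 'g \<Rightarrow> 'k) set" where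
  "dsum I G = {x. \<forall>A. (A \<in> I \<longrightarrow> x A \<in> W.span (G A)) \<and> (A \<notin> I \<longrightarrow> x A = 0)}"

definition single :: "'s set \<Rightarrow> ('g \<Rightarrow> 'k::field) \<Rightarrow> ('s set \<Rightarrow> 'g \<Rightarrow> 'k)" where
  "single A w = (\<lambda>B. if B = A then w else 0)"

lemma linear_single: "Vector_Spaces.linear sW sC (single A)"
  unfolding Vector_Spaces.linear_iff
  by (auto simp: W.vector_space_axioms C.vector_space_axioms single_def sC_def sW_def fun_eq_iff)

lemma linear_component: "Vector_Spaces.linear sC sW (\<lambda>x. x A)"
  unfolding Vector_Spaces.linear_iff
  by (auto simp: W.vector_space_axioms C.vector_space_axioms sC_def sW_def fun_eq_iff)

lemma subspace_dsum: "C.subspace (dsum I G)"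
  unfolding C.subspace_def
  by (auto simp: dsum_def sC_apply W.span_add W.span_scale W.span_zero)

lemma dsum_subset_span:
  assumes fin: "finite I"
  shows "dsum I G \<subseteq> C.span (\<Union>A\<in>I. single A ` G A)"
proof
  fix x assume x: "x \<in> dsum I G"
  have xs: "x = (\<Sum>A\<in>I. single A (x A))"
  proof (rule ext)
    fix B
    have "(\<Sum>A\<in>I. single A (x A)) B = (if B \<in> I then x B else 0)"
      using fin by (simp add: sum_apply single_def sum.delta)
    then show "x B = (\<Sum>A\<in>I. single A (x A)) B" using x by (auto simp: dsum_def)
  qed
  have "(\<Sum>A\<in>I. single A (x A)) \<in> C.span (\<Union>A\<in>I. single A ` G A)"
  proof (rule C.span_sum)
    fix A assume A: "A \<in> I"
    have "single A (x A) \<in> single A ` W.span (G A)" using x A by (auto simp: dsum_def)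
    also have "\<dots> = C.span (single A ` G A)"
      using WC.linear_span_image[OF linear_single, of A "G A"] by simp
    also have "\<dots> \<subseteq> C.span (\<Union>A\<in>I. single A ` G A)" by (rule C.span_mono) (use A in auto)
    finally show "single A (x A) \<in> C.span (\<Union>A\<in>I. single A ` G A)" .
  qed
  then show "x \<in> C.span (\<Union>A\<in>I. single A ` G A)" using xs by simp
qed

lemma dim_dsum:
  assumes "finite I" "\<forall>A\<in>I. finite (G A)"
  shows "C.dim (dsum I G) = (\<Sum>A\<in>I. W.dim (G A))"
  using assms
proof (induction I rule: finite_induct)
  case empty
  have "dsum {} G = {0}" by (auto simp: dsum_def fun_eq_iff)
  then show ?case using C_dim_zero by simp
next
  case (insert A0 I)
  let ?V = "dsum (insert A0 I) G"
  have finF: "finite (\<Union>A\<in>insert A0 I. single A ` G A)" using insert by auto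
  have rn: "C.dim ?V = C.dim {x\<in>?V. x A0 = 0} + W.dim ((\<lambda>x. x A0) ` ?V)"
    by (rule CW.dim_eq_dim_kernel_add_dim_image[OF linear_component subspace_dsum finF dsum_subset_span])
      (use insert in simp)
  have "{x\<in>?V. x A0 = 0} = dsum I G" using insert by (auto simp: dsum_def W.span_zero)
  moreover have "(\<lambda>x. x A0) ` ?V = W.span (G A0)"
  proof
    show "(\<lambda>x. x A0) ` ?V \<subseteq> W.span (G A0)" by (auto simp: dsum_def)
    show "W.span (G A0) \<subseteq> (\<lambda>x. x A0) ` ?V"
    proof
      fix w assume w: "w \<in> W.span (G A0)"
      have "single A0 w \<in> ?V" using w by (auto simp: dsum_def single_def W.span_zero)
      then show "w \<in> (\<lambda>x. x A0) ` ?V" by (intro image_eqI[where x="single A0 w"]) (auto simp: single_def)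
    qed
  qed
  ultimately show ?case using rn insert by simp
qed

section \<open>The complex of a vector configuration over a coefficient space\<close>

text \<open>\<open>face_sign \<omega> E e A\<close> is the sign of the permutation sorting \<open>e\<close> followed by the
  increasing sequence of \<open>E - insert e A\<close> (see \<open>cpx_d_eq_bdry\<close>).\<close>

definition face_sign :: "'s rel \<Rightarrow> 's set \<Rightarrow> 's \<Rightarrow> 's set \<Rightarrow> 'k::field" where
  "face_sign \<omega> E e A = (-1) ^ card {b \<in> E - insert e A. (b, e) \<in> \<omega>}"

definition bdry :: "'s rel \<Rightarrow> 's set \<Rightarrow> ('s set \<Rightarrow> 'g \<Rightarrow> 'k::field) \<Rightarrow> ('s set \<Rightarrow> 'g \<Rightarrow> 'k)" where
  "bdry \<omega> E x = (\<lambda>A g. \<Sum>e\<in>E - A. face_sign \<omega> E e A * x (insert e A) g)"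

definition face_chains ::
  "('g \<Rightarrow> 'k::field) set \<Rightarrow> ('s \<Rightarrow> 'g \<Rightarrow> 'k) \<Rightarrow> 's set \<Rightarrow> nat \<Rightarrow> ('s set \<Rightarrow> 'g \<Rightarrow> 'k) set" where
  "face_chains X v E i = dsum {A. A \<subseteq> E \<and> card A = i} (\<lambda>A. X \<union> v ` (E - A))"

lemma face_sign_mult_self [simp]: "face_sign \<omega> E e A * face_sign \<omega> E e A = 1"
  by (simp add: face_sign_def)

lemma bdry_apply: "bdry \<omega> E x A = (\<Sum>e\<in>E - A. sW (face_sign \<omega> E e A) (x (insert e A)))"
  by (simp add: bdry_def sum_apply sW_def fun_eq_iff)

lemma linear_bdry: "Vector_Spaces.linear sC sC (bdry \<omega> E)"
  unfolding Vector_Spaces.linear_iff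
  by (auto simp: C.vector_space_axioms bdry_def sC_def fun_eq_iff sum.distrib sum_distrib_left
      algebra_simps)

lemma bdry_add: "bdry \<omega> E (x + y) = bdry \<omega> E x + bdry \<omega> E y"
  by (auto simp: bdry_def fun_eq_iff sum.distrib algebra_simps)

lemma bdry_diff: "bdry \<omega> E (x - y) = bdry \<omega> E x - bdry \<omega> E y"
  by (auto simp: bdry_def fun_eq_iff sum_subtractf algebra_simps)

lemma bdry_zero [simp]: "bdry \<omega> E 0 = 0"
  by (auto simp: bdry_def fun_eq_iff)

lemma face_chainsI:
  "(\<And>A. A \<subseteq> E \<Longrightarrow> card A = i \<Longrightarrow> x A \<in> W.span (X \<union> v ` (E - A))) \<Longrightarrow>
   (\<And>A. \<not> (A \<subseteq> E \<and> card A = i) \<Longrightarrow> x A = 0) \<Longrightarrow> x \<in> face_chains X v E i"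
  by (auto simp: face_chains_def dsum_def)

lemma face_chainsD:
  "x \<in> face_chains X v E i \<Longrightarrow> A \<subseteq> E \<Longrightarrow> card A = i \<Longrightarrow> x A \<in> W.span (X \<union> v ` (E - A))"
  by (auto simp: face_chains_def dsum_def)

lemma face_chains_vanish: "x \<in> face_chains X v E i \<Longrightarrow> \<not> (A \<subseteq> E \<and> card A = i) \<Longrightarrow> x A = 0"
  by (auto simp: face_chains_def dsum_def)

lemma subspace_face_chains: "C.subspace (face_chains X v E i)"
  unfolding face_chains_def by (rule subspace_dsum)

lemma face_chains_zero [simp]: "0 \<in> face_chains X v E i"
  by (rule C.subspace_0[OF subspace_face_chains])

lemma face_chains_add: "x \<in> face_chains X v E i \<Longrightarrow> y \<in> face_chains X v E i \<Longrightarrow> x + y \<in> face_chains X v E i"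
  by (rule C.subspace_add[OF subspace_face_chains])

lemma face_chains_diff: "x \<in> face_chains X v E i \<Longrightarrow> y \<in> face_chains X v E i \<Longrightarrow> x - y \<in> face_chains X v E i"
  by (rule C.subspace_diff[OF subspace_face_chains])

lemma bdry_in_face_chains:
  assumes fin: "finite E" and y: "y \<in> face_chains X v E (Suc i)"
  shows "bdry \<omega> E y \<in> face_chains X v E i"
proof (rule face_chainsI)
  fix A assume A: "A \<subseteq> E" "card A = i"
  have fA: "finite A" using A fin finite_subset by auto
  have yA: "y (insert e A) \<in> W.span (X \<union> v ` (E - A))" if e: "e \<in> E - A" for e
  proof -
    have "y (insert e A) \<in> W.span (X \<union> v ` (E - insert e A))"
      by (rule face_chainsD[OF y]) (use A e fA in auto)
    also have "\<dots> \<subseteq> W.span (X \<union> v ` (E - A))" by (rule W.span_mono) auto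
    finally show ?thesis .
  qed
  show "bdry \<omega> E y A \<in> W.span (X \<union> v ` (E - A))"
    unfolding bdry_apply using yA by (blast intro: W.span_sum W.span_scale)
next
  fix A assume A: "\<not> (A \<subseteq> E \<and> card A = i)"
  have "y (insert e A) = 0" if e: "e \<in> E - A" for e
  proof (rule face_chains_vanish[OF y], rule notI)
    assume h: "insert e A \<subseteq> E \<and> card (insert e A) = Suc i"
    then have "finite A" using fin finite_subset by auto
    with h e A show False by auto
  qed
  then show "bdry \<omega> E y A = 0" by (simp add: bdry_def fun_eq_iff)
qed

lemma face_chains_above_card:
  assumes "finite E" "card E < i" "x \<in> face_chains X v E i"
  shows "x = 0"
proof
  fix A show "x A = 0 A"
    using face_chains_vanish[OF assms(3), of A] card_mono[OF assms(1), of A] assms(2) by fastforce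
qed

lemma bdry_face_chains_zero:
  assumes "x \<in> face_chains X v E 0" "finite E"
  shows "bdry \<omega> E x = 0"
proof -
  have "x (insert e A) = 0" for e A
    by (rule face_chains_vanish[OF assms(1)]) (use assms(2) finite_subset in fastforce)
  then show ?thesis by (simp add: bdry_def fun_eq_iff)
qed

lemma face_sign_swap:
  assumes lo: "linear_order_on D \<omega>" and fin: "finite E"
    and ef: "e \<in> E - A" "f \<in> E - A" "e \<noteq> f" "(e, f) \<in> \<omega>"
  shows "face_sign \<omega> E f A = - face_sign \<omega> E f (insert e A)"
    "face_sign \<omega> E e (insert f A) = face_sign \<omega> E e A"
proof -
  have "{b \<in> E - insert f A. (b, f) \<in> \<omega>} = insert e {b \<in> E - insert f (insert e A). (b, f) \<in> \<omega>}"
    using ef by auto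
  then have "card {b \<in> E - insert f A. (b, f) \<in> \<omega>} =
      Suc (card {b \<in> E - insert f (insert e A). (b, f) \<in> \<omega>})"
    using fin by simp
  then show "face_sign \<omega> E f A = - face_sign \<omega> E f (insert e A)"
    by (simp add: face_sign_def insert_commute)
  have "{b \<in> E - insert e (insert f A). (b, e) \<in> \<omega>} = {b \<in> E - insert e A. (b, e) \<in> \<omega>}"
    using ef linear_order_on_antisymD[OF lo, of e f] by auto
  then show "face_sign \<omega> E e (insert f A) = face_sign \<omega> E e A" by (simp add: face_sign_def)
qed

lemma bdry_bdry:
  assumes lo: "linear_order_on D \<omega>" and ED: "E \<subseteq> D" and fin: "finite E"
  shows "bdry \<omega> E (bdry \<omega> E x) = 0"
proof (rule ext, rule ext)
  fix A g
  define T where "T p = face_sign \<omega> E (fst p) A * face_sign \<omega> E (snd p) (insert (fst p) A) *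
      x (insert (snd p) (insert (fst p) A)) g" for p
  define P where "P = Sigma (E - A) (\<lambda>e. E - insert e A)"
  define P1 where "P1 = {p \<in> P. p \<in> \<omega>}"
  define P2 where "P2 = {p \<in> P. prod.swap p \<in> \<omega>}"
  have finP: "finite P" using fin by (simp add: P_def)
  have PU: "P = P1 \<union> P2"
    using linear_order_on_totalD[OF lo] ED by (auto simp: P_def P1_def P2_def) blast
  have Pdisj: "P1 \<inter> P2 = {}"
    using linear_order_on_antisymD[OF lo] by (auto simp: P_def P1_def P2_def)
  have "bdry \<omega> E (bdry \<omega> E x) A g = (\<Sum>e\<in>E - A. \<Sum>f\<in>E - insert e A. T (e, f))"
    by (simp add: bdry_def T_def sum_distrib_left mult.assoc)
  also have "\<dots> = sum T P"
    unfolding P_def using sum.Sigma[of "E - A" "\<lambda>e. E - insert e A" "\<lambda>e f. T (e, f)"] fin by simp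
  also have "\<dots> = sum T P1 + sum T P2"
    unfolding PU by (rule sum.union_disjoint) (use finP PU Pdisj in auto)
  also have "sum T P2 = sum (T \<circ> prod.swap) P1"
  proof -
    have "P2 = prod.swap ` P1" by (force simp: P_def P1_def P2_def)
    moreover have "inj_on prod.swap P1" by (rule inj_on_subset[of _ UNIV]) auto
    ultimately show ?thesis by (simp add: sum.reindex)
  qed
  also have "sum (T \<circ> prod.swap) P1 = sum (\<lambda>p. - T p) P1"
  proof (rule sum.cong[OF refl])
    fix p assume p: "p \<in> P1"
    obtain e f where pe: "p = (e, f)" by fastforce
    have ef: "e \<in> E - A" "f \<in> E - A" "e \<noteq> f" "(e, f) \<in> \<omega>"
      using p by (auto simp: pe P1_def P_def)
    show "(T \<circ> prod.swap) p = - T p"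
      by (simp add: pe T_def insert_commute face_sign_swap[OF lo fin ef])
  qed
  finally show "bdry \<omega> E (bdry \<omega> E x) A g = 0 A g" by (simp add: sum_negf)
qed

section \<open>Splitting off the greatest vertex\<close>

lemma face_sign_Diff_greater:
  assumes lo: "linear_order_on D \<omega>" and e: "e \<noteq> m" "(e, m) \<in> \<omega>"
  shows "face_sign \<omega> E e A = face_sign \<omega> (E - {m}) e A"
proof -
  have "{b \<in> E - insert e A. (b, e) \<in> \<omega>} = {b \<in> E - {m} - insert e A. (b, e) \<in> \<omega>}"
    using e linear_order_on_antisymD[OF lo, of e m] by auto
  then show ?thesis by (simp add: face_sign_def)
qed

definition link :: "'s \<Rightarrow> ('s set \<Rightarrow> 'g \<Rightarrow> 'k::field) \<Rightarrow> ('s set \<Rightarrow> 'g \<Rightarrow> 'k)" where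
  "link m z = (\<lambda>B. if m \<in> B then 0 else z (insert m B))"

definition join :: "'s \<Rightarrow> ('s set \<Rightarrow> 'g \<Rightarrow> 'k::field) \<Rightarrow> ('s set \<Rightarrow> 'g \<Rightarrow> 'k)" where
  "join m y = (\<lambda>A. if m \<in> A then y (A - {m}) else 0)"

lemma face_chains_Diff_vanish: "x \<in> face_chains Y w (E - {m}) j \<Longrightarrow> m \<in> A \<Longrightarrow> x A = 0"
  by (rule face_chains_vanish) auto

lemma link_join:
  assumes "y \<in> face_chains Y w (E - {m}) j"
  shows "link m (join m y) = y"
proof
  fix B show "link m (join m y) B = y B"
    using face_chains_Diff_vanish[OF assms, of B] by (cases "m \<in> B") (auto simp: link_def join_def)
qed

lemma link_face_chains_Diff:
  "x \<in> face_chains Y w (E - {m}) j \<Longrightarrow> link m x = 0"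
  unfolding link_def fun_eq_iff using face_chains_Diff_vanish[of x Y w E m j] by auto

lemma face_sign_greatest:
  assumes top_greatest: "\<forall>b\<in>E. (b, m) \<in> \<omega>"
  shows "face_sign \<omega> E m A = (-1) ^ card (E - insert m A)"
proof -
  have "{b \<in> E - insert m A. (b, m) \<in> \<omega>} = E - insert m A" using top_greatest by auto
  then show ?thesis by (simp add: face_sign_def)
qed

lemma face_sign_greatest_insert:
  assumes fin: "finite E" and top_greatest: "\<forall>b\<in>E. (b, m) \<in> \<omega>"
    and e: "e \<in> E" "e \<notin> B" "e \<noteq> m"
  shows "face_sign \<omega> E m (insert e B) = - face_sign \<omega> E m B"
proof -
  have "E - insert m B = insert e (E - insert m (insert e B))" using e by auto
  then have "card (E - insert m B) = Suc (card (E - insert m (insert e B)))" using fin by simp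
  then show ?thesis by (simp add: face_sign_greatest[OF top_greatest])
qed

definition rel_rank :: "('g \<Rightarrow> 'k::field) set \<Rightarrow> ('s \<Rightarrow> 'g \<Rightarrow> 'k) \<Rightarrow> 's set \<Rightarrow> int" where
  "rel_rank X v E = int (W.dim (X \<union> v ` E)) - int (W.dim X)"

lemma rel_rank_insert:
  assumes "finite X" "finite E" "e \<notin> E"
  shows "rel_rank X v (insert e E) =
    rel_rank X v E + (if v e \<in> W.span (X \<union> v ` E) then 0 else 1)"
proof -
  have "X \<union> v ` insert e E = insert (v e) (X \<union> v ` E)" by auto
  then show ?thesis using W.dim_insert_of_finite[of "X \<union> v ` E" "v e"] assms by (simp add: rel_rank_def)
qed

lemma rel_rank_bounds:
  assumes "finite X" "finite E"
  shows "0 \<le> rel_rank X v E \<and> rel_rank X v E \<le> int (card E)"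
  using assms(2)
proof (induction E rule: finite_induct)
  case empty
  then show ?case by (simp add: rel_rank_def)
next
  case (insert e E)
  then show ?case by (simp add: rel_rank_insert assms(1))
qed

lemma rel_rank_contract:
  assumes "finite X" "finite E" "e \<notin> E" "v e \<notin> W.span X"
  shows "rel_rank (insert (v e) X) v E = rel_rank X v (insert e E) - 1"
proof -
  have "insert (v e) X \<union> v ` E = X \<union> v ` insert e E" by auto
  then show ?thesis using W.dim_insert_of_finite[of X "v e"] assms by (simp add: rel_rank_def)
qed

locale top_vertex =
  fixes D :: "'s set" and \<omega> :: "'s rel" and E :: "'s set" and m :: 's
  assumes lo: "linear_order_on D \<omega>" and fin: "finite E"
    and top_in: "m \<in> E" and top_greatest: "\<forall>b\<in>E. (b, m) \<in> \<omega>"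
begin

lemma bdry_off_top:
  assumes A: "m \<notin> A"
  shows "bdry \<omega> E z A g = bdry \<omega> (E - {m}) z A g + face_sign \<omega> E m A * z (insert m A) g"
proof -
  have EA: "E - A = insert m (E - {m} - A)" using top_in A by auto
  have "bdry \<omega> E z A g = face_sign \<omega> E m A * z (insert m A) g +
      (\<Sum>e\<in>E - {m} - A. face_sign \<omega> E e A * z (insert e A) g)"
    unfolding bdry_def EA by (subst sum.insert) (use fin in auto)
  also have "(\<Sum>e\<in>E - {m} - A. face_sign \<omega> E e A * z (insert e A) g) = bdry \<omega> (E - {m}) z A g"
    unfolding bdry_def
  proof (rule sum.cong[OF refl])
    fix e assume "e \<in> E - {m} - A"
    then show "face_sign \<omega> E e A * z (insert e A) g = face_sign \<omega> (E - {m}) e A * z (insert e A) g"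
      using face_sign_Diff_greater[OF lo, of e m E A] top_greatest by auto
  qed
  finally show ?thesis by simp
qed

text \<open>The faces through \<open>m\<close> carry the complex over \<open>E - {m}\<close>, shifted by one degree.\<close>

lemma bdry_through_top:
  assumes B: "m \<notin> B"
  shows "bdry \<omega> E z (insert m B) = bdry \<omega> (E - {m}) (link m z) B"
proof (rule ext)
  fix g
  have EB: "E - insert m B = E - {m} - B" by auto
  show "bdry \<omega> E z (insert m B) g = bdry \<omega> (E - {m}) (link m z) B g"
    unfolding bdry_def EB
  proof (rule sum.cong[OF refl])
    fix e assume e: "e \<in> E - {m} - B"
    have "face_sign \<omega> E e (insert m B) = face_sign \<omega> (E - {m}) e (insert m B)"
      using face_sign_Diff_greater[OF lo, of e m] top_greatest e by auto
    also have "\<dots> = face_sign \<omega> (E - {m}) e B"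
    proof -
      have "{b \<in> E - {m} - insert e (insert m B). (b, e) \<in> \<omega>} =
          {b \<in> E - {m} - insert e B. (b, e) \<in> \<omega>}"
        by auto
      then show ?thesis by (simp add: face_sign_def)
    qed
    finally have eq: "face_sign \<omega> E e (insert m B) = face_sign \<omega> (E - {m}) e B" .
    have eq2: "link m z (insert e B) g = z (insert e (insert m B)) g"
      using e B by (auto simp: link_def insert_commute)
    show "face_sign \<omega> E e (insert m B) * z (insert e (insert m B)) g =
        face_sign \<omega> (E - {m}) e B * link m z (insert e B) g"
      by (simp only: eq eq2)
  qed
qed

lemma bdry_link:
  assumes "bdry \<omega> E z = 0"
  shows "bdry \<omega> (E - {m}) (link m z) = 0"
proof
  fix B show "bdry \<omega> (E - {m}) (link m z) B = 0 B"
  proof (cases "m \<in> B")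
    case True
    then show ?thesis by (simp add: bdry_def link_def fun_eq_iff)
  next
    case False
    then show ?thesis using bdry_through_top[OF False, of z] assms by simp
  qed
qed

lemma link_in_face_chains:
  assumes z: "z \<in> face_chains X v E (Suc j)"
  shows "link m z \<in> face_chains X v (E - {m}) j"
proof (rule face_chainsI)
  fix B assume B: "B \<subseteq> E - {m}" "card B = j"
  have fB: "finite B" using B fin finite_subset by blast
  have "z (insert m B) \<in> W.span (X \<union> v ` (E - insert m B))"
    by (rule face_chainsD[OF z]) (use B top_in fB in \<open>auto simp: card_insert_if\<close>)
  moreover have "E - insert m B = E - {m} - B" by auto
  ultimately show "link m z B \<in> W.span (X \<union> v ` (E - {m} - B))" using B by (auto simp: link_def)
next
  fix B assume B: "\<not> (B \<subseteq> E - {m} \<and> card B = j)"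
  show "link m z B = 0"
  proof (cases "m \<in> B")
    case False
    have "z (insert m B) = 0"
    proof (rule face_chains_vanish[OF z], rule notI)
      assume h: "insert m B \<subseteq> E \<and> card (insert m B) = Suc j"
      then have "finite B" using fin finite_subset by auto
      with h B False show False by auto
    qed
    then show ?thesis by (simp add: link_def)
  qed (simp add: link_def)
qed

lemma link_face_chains_zero:
  assumes z: "z \<in> face_chains X v E 0"
  shows "link m z = 0"
proof
  fix B show "link m z B = 0 B"
  proof (cases "m \<in> B")
    case False
    have "z (insert m B) = 0"
      by (rule face_chains_vanish[OF z]) (use fin finite_subset in fastforce)
    then show ?thesis using False by (simp add: link_def)
  qed (simp add: link_def)
qed

lemma join_in_face_chains:
  assumes y: "y \<in> face_chains X v (E - {m}) j"
  shows "join m y \<in> face_chains X v E (Suc j)"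
proof (rule face_chainsI)
  fix A assume A: "A \<subseteq> E" "card A = Suc j"
  show "join m y A \<in> W.span (X \<union> v ` (E - A))"
  proof (cases "m \<in> A")
    case True
    have fA: "finite A" using A fin finite_subset by auto
    have "y (A - {m}) \<in> W.span (X \<union> v ` (E - {m} - (A - {m})))"
      by (rule face_chainsD[OF y]) (use A True fA in auto)
    moreover have "E - {m} - (A - {m}) = E - A" using True by auto
    ultimately show ?thesis using True by (simp add: join_def)
  qed (simp add: join_def W.span_zero)
next
  fix A assume A: "\<not> (A \<subseteq> E \<and> card A = Suc j)"
  show "join m y A = 0"
  proof (cases "m \<in> A")
    case True
    have "y (A - {m}) = 0"
    proof (rule face_chains_vanish[OF y], rule notI)
      assume h: "A - {m} \<subseteq> E - {m} \<and> card (A - {m}) = j"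
      then have "A \<subseteq> E" using top_in by auto
      moreover from this have "finite A" using fin finite_subset by auto
      ultimately show False using h A True card_Suc_Diff1[of A m] by auto
    qed
    then show ?thesis using True by (simp add: join_def)
  qed (simp add: join_def)
qed

lemma bdry_join_through_top:
  assumes "y \<in> face_chains X v (E - {m}) j" "m \<notin> B"
  shows "bdry \<omega> E (join m y) (insert m B) = bdry \<omega> (E - {m}) y B"
  using bdry_through_top[OF assms(2), of "join m y"] link_join[OF assms(1)] by simp

lemma bdry_join_off_top:
  assumes A: "m \<notin> A"
  shows "bdry \<omega> E (join m y) A g = face_sign \<omega> E m A * y A g"
proof -
  have "bdry \<omega> (E - {m}) (join m y) A g = 0"
    unfolding bdry_def by (rule sum.neutral) (use A in \<open>auto simp: join_def\<close>)
  moreover have "insert m A - {m} = A" using A by auto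
  ultimately show ?thesis using bdry_off_top[OF A, of "join m y" g] by (simp add: join_def)
qed

text \<open>If the components of a cycle on the faces avoiding \<open>m\<close> do not need \<open>v m\<close>, then coning
  them off with \<open>m\<close> gives a primitive.\<close>

lemma cone_boundary_exists:
  assumes z: "z \<in> face_chains X v E i" and cyc: "\<And>B. m \<notin> B \<Longrightarrow> bdry \<omega> E z B = 0"
    and off_top: "\<And>A. A \<subseteq> E - {m} \<Longrightarrow> card A = i \<Longrightarrow> z A \<in> W.span (X \<union> v ` (E - {m} - A))"
  shows "\<exists>y\<in>face_chains X v E (Suc i). bdry \<omega> E y = z"
proof
  define h where "h B = (if m \<in> B then 0 else sW (face_sign \<omega> E m B) (z B))" for B
  have h: "h \<in> face_chains X v (E - {m}) i"
  proof (rule face_chainsI)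
    fix B assume "B \<subseteq> E - {m}" "card B = i"
    then show "h B \<in> W.span (X \<union> v ` (E - {m} - B))" by (simp add: h_def W.span_scale W.span_zero off_top)
  next
    fix B assume B: "\<not> (B \<subseteq> E - {m} \<and> card B = i)"
    show "h B = 0"
    proof (cases "m \<in> B")
      case False
      then have "z B = 0" using B by (intro face_chains_vanish[OF z]) auto
      then show ?thesis by (simp add: h_def sW_def fun_eq_iff)
    qed (simp add: h_def)
  qed
  show "join m h \<in> face_chains X v E (Suc i)" by (rule join_in_face_chains[OF h])
  show "bdry \<omega> E (join m h) = z"
  proof (rule ext, rule ext)
    fix A g
    show "bdry \<omega> E (join m h) A g = z A g"
    proof (cases "m \<in> A")
      case False
      then show ?thesis by (simp add: bdry_join_off_top h_def sW_def)
    next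
      case True
      define B where "B = A - {m}"
      have AB: "A = insert m B" "m \<notin> B" using True B_def by auto
      have "bdry \<omega> E (join m h) A g = bdry \<omega> (E - {m}) h B g"
        using bdry_join_through_top[OF h AB(2)] AB by simp
      also have "\<dots> = - face_sign \<omega> E m B * bdry \<omega> (E - {m}) z B g"
        unfolding bdry_def sum_distrib_left
      proof (rule sum.cong[OF refl])
        fix e assume e: "e \<in> E - {m} - B"
        have "h (insert e B) g = - face_sign \<omega> E m B * z (insert e B) g"
          using e AB by (auto simp: h_def sW_def face_sign_greatest_insert[OF fin top_greatest])
        then show "face_sign \<omega> (E - {m}) e B * h (insert e B) g =
            - face_sign \<omega> E m B * (face_sign \<omega> (E - {m}) e B * z (insert e B) g)"
          by simp
      qed
      also have "\<dots> = z A g"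
      proof -
        have "bdry \<omega> (E - {m}) z B g = - (face_sign \<omega> E m B * z (insert m B) g)"
          using bdry_off_top[OF AB(2), of z g] cyc[OF AB(2)] by (simp add: eq_neg_iff_add_eq_0)
        then show ?thesis using AB by simp
      qed
      finally show ?thesis .
    qed
  qed
qed

lemma face_chains_extend:
  assumes u: "u \<in> face_chains Y w (E - {m}) j"
    and sub: "\<And>A. A \<subseteq> E - {m} \<Longrightarrow> W.span (Y \<union> w ` (E - {m} - A)) \<subseteq> W.span (X \<union> v ` (E - A))"
  shows "u \<in> face_chains X v E j"
proof (rule face_chainsI)
  fix A assume A: "A \<subseteq> E" "card A = j"
  show "u A \<in> W.span (X \<union> v ` (E - A))"
  proof (cases "m \<in> A")
    case True
    then show ?thesis using face_chains_Diff_vanish[OF u] W.span_zero by simp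
  next
    case False
    then have A': "A \<subseteq> E - {m}" using A by auto
    then show ?thesis using face_chainsD[OF u A' A(2)] sub[OF A'] by auto
  qed
next
  fix A assume "\<not> (A \<subseteq> E \<and> card A = j)"
  then show "u A = 0" by (intro face_chains_vanish[OF u]) auto
qed

lemma bdry_face_chains_Diff:
  assumes u: "u \<in> face_chains Y w (E - {m}) j"
  shows "bdry \<omega> E u = (\<lambda>A. if m \<in> A then 0 else bdry \<omega> (E - {m}) u A)"
proof
  fix A show "bdry \<omega> E u A = (if m \<in> A then 0 else bdry \<omega> (E - {m}) u A)"
  proof (cases "m \<in> A")
    case True
    then have "A = insert m (A - {m})" "m \<notin> A - {m}" by auto
    then show ?thesis
      using bdry_through_top[of "A - {m}" u] link_face_chains_Diff[OF u] True by simp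
  next
    case False
    then show ?thesis
      using bdry_off_top[OF False, of u] face_chains_Diff_vanish[OF u, of "insert m A"]
      by (simp add: fun_eq_iff)
  qed
qed

text \<open>Chains supported away from \<open>m\<close> are the chains of the contraction of \<open>m\<close>.\<close>

lemma face_chains_contract:
  assumes w: "w \<in> face_chains X v E i" and w0: "\<And>A. m \<in> A \<Longrightarrow> w A = 0"
  shows "w \<in> face_chains (insert (v m) X) v (E - {m}) i"
proof (rule face_chainsI)
  fix A assume A: "A \<subseteq> E - {m}" "card A = i"
  have "X \<union> v ` (E - A) = insert (v m) X \<union> v ` (E - {m} - A)" using A top_in by auto
  then show "w A \<in> W.span (insert (v m) X \<union> v ` (E - {m} - A))" using face_chainsD[OF w, of A] A by auto
next
  fix A assume A: "\<not> (A \<subseteq> E - {m} \<and> card A = i)"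
  show "w A = 0"
  proof (cases "m \<in> A")
    case True
    then show ?thesis by (rule w0)
  next
    case False
    then show ?thesis using A by (intro face_chains_vanish[OF w]) auto
  qed
qed

lemma bdry_contract:
  assumes w0: "\<And>A. m \<in> A \<Longrightarrow> w A = 0" and cyc: "bdry \<omega> E w = 0"
  shows "bdry \<omega> (E - {m}) w = 0"
proof (rule ext, rule ext)
  fix B g
  show "bdry \<omega> (E - {m}) w B g = 0 B g"
  proof (cases "m \<in> B")
    case True
    then show ?thesis unfolding bdry_def using w0 by simp
  next
    case False
    then show ?thesis using bdry_off_top[OF False, of w g] cyc w0[of "insert m B"] by simp
  qed
qed

lemma boundary_exists_loop:
  assumes loop: "v m \<in> W.span X" and z: "z \<in> face_chains X v E i" and cyc: "bdry \<omega> E z = 0"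
  shows "\<exists>y\<in>face_chains X v E (Suc i). bdry \<omega> E y = z"
proof (rule cone_boundary_exists[OF z])
  fix A assume A: "A \<subseteq> E - {m}" "card A = i"
  have "z A \<in> W.span (X \<union> v ` (E - A))" using face_chainsD[OF z, of A] A by auto
  moreover have "X \<union> v ` (E - A) = insert (v m) (X \<union> v ` (E - {m} - A))" using A top_in by auto
  moreover have "v m \<in> W.span (X \<union> v ` (E - {m} - A))"
    using loop W.span_mono[of X "X \<union> v ` (E - {m} - A)"] by auto
  ultimately show "z A \<in> W.span (X \<union> v ` (E - {m} - A))" by (simp add: W.span_redundant)
qed (use cyc in simp)

text \<open>For a coloop \<open>m\<close>, the \<open>v m\<close>-coordinates of the components of a cycle avoiding \<open>m\<close> form
  a cycle of the complex of the simplex on \<open>E - {m}\<close>.\<close>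

lemma coloop_split:
  assumes coloop: "v m \<notin> W.span (X \<union> v ` (E - {m}))"
    and z: "z \<in> face_chains X v E i" and cyc: "bdry \<omega> E z = 0"
  obtains zl where "zl \<in> face_chains {v m} (\<lambda>_. 0) (E - {m}) i" "bdry \<omega> (E - {m}) zl = 0"
    "\<And>A. zl A \<in> W.span {v m}"
    "\<And>A. A \<subseteq> E - {m} \<Longrightarrow> card A = i \<Longrightarrow> z A - zl A \<in> W.span (X \<union> v ` (E - {m} - A))"
proof -
  define E' where "E' = E - {m}"
  define P where "P = X \<union> v ` E'"
  have coord: "\<exists>k. z A - sW k (v m) \<in> W.span (X \<union> v ` (E' - A))" if A: "A \<subseteq> E'" "card A = i" for A
  proof -
    have "z A \<in> W.span (X \<union> v ` (E - A))" using face_chainsD[OF z] A E'_def by auto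
    moreover have "X \<union> v ` (E - A) = insert (v m) (X \<union> v ` (E' - A))" using A top_in E'_def by auto
    ultimately show ?thesis using W.span_breakdown_eq[of "z A" "v m" "X \<union> v ` (E' - A)"] by simp
  qed
  define lam where "lam A = (if A \<subseteq> E' \<and> card A = i
      then (SOME k. z A - sW k (v m) \<in> W.span (X \<union> v ` (E' - A))) else 0)" for A
  have lamP: "z A - sW (lam A) (v m) \<in> W.span (X \<union> v ` (E' - A))" if "A \<subseteq> E'" "card A = i" for A
    using someI_ex[OF coord[OF that]] that by (simp add: lam_def)
  define zl where "zl A = sW (lam A) (v m)" for A
  have zl_chains: "zl \<in> face_chains {v m} (\<lambda>_. 0) E' i"
  proof (rule face_chainsI)
    fix A show "zl A \<in> W.span ({v m} \<union> (\<lambda>_. 0) ` (E' - A))"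
      by (simp add: zl_def W.span_scale W.span_base)
  next
    fix A assume "\<not> (A \<subseteq> E' \<and> card A = i)"
    then show "zl A = 0" by (auto simp: zl_def lam_def sW_def fun_eq_iff)
  qed
  have zP: "z A \<in> W.span P" if "m \<in> A" for A
  proof (cases "A \<subseteq> E \<and> card A = i")
    case True
    then have "z A \<in> W.span (X \<union> v ` (E - A))" using face_chainsD[OF z] by auto
    moreover have "W.span (X \<union> v ` (E - A)) \<subseteq> W.span P"
      by (rule W.span_mono) (use that in \<open>auto simp: P_def E'_def\<close>)
    ultimately show ?thesis by auto
  next
    case False
    then show ?thesis using face_chains_vanish[OF z] W.span_zero by simp
  qed
  have zlP: "z A - zl A \<in> W.span P" for A
  proof (cases "A \<subseteq> E' \<and> card A = i")
    case True
    then have "z A - zl A \<in> W.span (X \<union> v ` (E' - A))" using lamP by (simp add: zl_def)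
    moreover have "W.span (X \<union> v ` (E' - A)) \<subseteq> W.span P" by (rule W.span_mono) (auto simp: P_def)
    ultimately show ?thesis by auto
  next
    case False
    then have zl0: "zl A = 0" by (auto simp: zl_def lam_def sW_def fun_eq_iff)
    show ?thesis
    proof (cases "m \<in> A")
      case True
      then show ?thesis using zP zl0 by simp
    next
      case mA: False
      then have "\<not> (A \<subseteq> E \<and> card A = i)" using False E'_def by auto
      then show ?thesis using face_chains_vanish[OF z] zl0 W.span_zero by simp
    qed
  qed
  have zl_cyc: "bdry \<omega> E' zl = 0"
  proof
    fix B
    define c where "c = (\<Sum>e\<in>E' - B. face_sign \<omega> E' e B * lam (insert e B))"
    have bdry_zl: "bdry \<omega> E' zl B = sW c (v m)"
      by (simp add: bdry_def zl_def c_def sW_def fun_eq_iff sum_distrib_right mult.assoc)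
    show "bdry \<omega> E' zl B = 0 B"
    proof (cases "m \<in> B")
      case True
      then have "lam (insert e B) = 0" for e using E'_def by (auto simp: lam_def)
      then show ?thesis using bdry_zl by (simp add: c_def sW_def fun_eq_iff)
    next
      case False
      have "bdry \<omega> E' z B = - sW (face_sign \<omega> E m B) (z (insert m B))"
        using bdry_off_top[OF False, of z] cyc E'_def
        by (simp add: fun_eq_iff sW_def eq_neg_iff_add_eq_0)
      then have "bdry \<omega> E' z B \<in> W.span P" using zP[of "insert m B"] by (simp add: W.span_neg W.span_scale)
      moreover have "bdry \<omega> E' (z - zl) B \<in> W.span P"
        unfolding bdry_apply by (rule W.span_sum, rule W.span_scale) (simp add: zlP)
      ultimately have "bdry \<omega> E' zl B \<in> W.span P"
        using W.span_diff by (fastforce simp: bdry_diff)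
      then have "sW c (v m) \<in> W.span P" using bdry_zl by simp
      have "c = 0"
      proof (rule ccontr)
        assume "c \<noteq> 0"
        then have "v m = sW (inverse c) (sW c (v m))" by (simp add: sW_def fun_eq_iff)
        with \<open>sW c (v m) \<in> W.span P\<close> coloop show False by (metis W.span_scale P_def E'_def)
      qed
      then show ?thesis using bdry_zl by (simp add: sW_def fun_eq_iff)
    qed
  qed
  show ?thesis
    by (rule that[of zl]) (use zl_chains zl_cyc lamP in \<open>auto simp: E'_def zl_def W.span_scale W.span_base\<close>)
qed

lemma boundary_exists_coloop:
  assumes ED: "E \<subseteq> D" and coloop: "v m \<notin> W.span (X \<union> v ` (E - {m}))"
    and i: "E - {m} = {} \<Longrightarrow> i \<noteq> 0"
    and z: "z \<in> face_chains X v E i" and cyc: "bdry \<omega> E z = 0"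
  shows "\<exists>y\<in>face_chains X v E (Suc i). bdry \<omega> E y = z"
proof (cases "E - {m} = {}")
  case True
  show ?thesis
  proof (rule cone_boundary_exists[OF z])
    fix A assume "A \<subseteq> E - {m}" "card A = i"
    then show "z A \<in> W.span (X \<union> v ` (E - {m} - A))" using True i by auto
  qed (use cyc in simp)
next
  case False
  obtain zl where zl: "zl \<in> face_chains {v m} (\<lambda>_. 0) (E - {m}) i" "bdry \<omega> (E - {m}) zl = 0"
      "\<And>A. zl A \<in> W.span {v m}"
    and z_zl: "\<And>A. A \<subseteq> E - {m} \<Longrightarrow> card A = i \<Longrightarrow> z A - zl A \<in> W.span (X \<union> v ` (E - {m} - A))"
    using coloop_split[OF coloop z cyc] by blast
  obtain m' where m': "m' \<in> E - {m}" "\<forall>b\<in>E - {m}. (b, m') \<in> \<omega>"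
    using linear_order_on_finite_has_greatest[OF lo _ False] fin ED by blast
  interpret E': top_vertex D \<omega> "E - {m}" m' using lo fin m' by unfold_locales auto
  have "\<exists>y\<in>face_chains {v m} (\<lambda>_. 0) (E - {m}) (Suc i). bdry \<omega> (E - {m}) y = zl"
  proof (rule E'.cone_boundary_exists[OF zl(1)])
    show "bdry \<omega> (E - {m}) zl B = 0" for B using zl(2) by simp
    show "zl A \<in> W.span ({v m} \<union> (\<lambda>_. 0) ` (E - {m} - {m'} - A))" for A
      using zl(3)[of A] W.span_mono[of "{v m}" "{v m} \<union> (\<lambda>_. 0) ` (E - {m} - {m'} - A)"] by blast
  qed
  then obtain mu where mu: "mu \<in> face_chains {v m} (\<lambda>_. 0) (E - {m}) (Suc i)" "bdry \<omega> (E - {m}) mu = zl"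
    by blast
  have mu_E: "mu \<in> face_chains X v E (Suc i)"
  proof (rule face_chains_extend[OF mu(1)])
    fix A assume "A \<subseteq> E - {m}"
    then show "W.span ({v m} \<union> (\<lambda>_. 0) ` (E - {m} - A)) \<subseteq> W.span (X \<union> v ` (E - A))"
      using top_in by (intro W.span_minimal) (auto intro: W.span_base W.span_zero)
  qed
  define z' where "z' = z - bdry \<omega> E mu"
  have z'_chains: "z' \<in> face_chains X v E i" unfolding z'_def by (rule face_chains_diff[OF z bdry_in_face_chains[OF fin mu_E]])
  have z'_cyc: "bdry \<omega> E z' = 0" unfolding z'_def bdry_diff using cyc bdry_bdry[OF lo ED fin] by simp
  obtain y' where y': "y' \<in> face_chains X v E (Suc i)" "bdry \<omega> E y' = z'"
  proof -
    have "\<exists>y\<in>face_chains X v E (Suc i). bdry \<omega> E y = z'"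
    proof (rule cone_boundary_exists[OF z'_chains])
      fix A assume A: "A \<subseteq> E - {m}" "card A = i"
      then have "z' A = z A - zl A" using bdry_face_chains_Diff[OF mu(1)] mu(2) by (auto simp: z'_def)
      then show "z' A \<in> W.span (X \<union> v ` (E - {m} - A))" using z_zl[OF A] by simp
    qed (use z'_cyc in simp)
    then show ?thesis using that by blast
  qed
  show ?thesis
  proof
    show "y' + mu \<in> face_chains X v E (Suc i)" by (rule face_chains_add[OF y'(1) mu_E])
    show "bdry \<omega> E (y' + mu) = z" using y'(2) by (simp add: bdry_add z'_def)
  qed
qed

lemma boundary_exists_deletion_contraction:
  assumes ED: "E \<subseteq> D" and finX: "finite X"
    and not_loop: "v m \<notin> W.span X" and not_coloop: "v m \<in> W.span (X \<union> v ` (E - {m}))"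
    and exact_Diff: "\<And>Y j w. finite Y \<Longrightarrow> int j \<noteq> int (card (E - {m})) - rel_rank Y v (E - {m}) \<Longrightarrow>
      w \<in> face_chains Y v (E - {m}) j \<Longrightarrow> bdry \<omega> (E - {m}) w = 0 \<Longrightarrow>
      \<exists>y\<in>face_chains Y v (E - {m}) (Suc j). bdry \<omega> (E - {m}) y = w"
    and i: "int i \<noteq> int (card E) - rel_rank X v E"
    and z: "z \<in> face_chains X v E i" and cyc: "bdry \<omega> E z = 0"
  shows "\<exists>y\<in>face_chains X v E (Suc i). bdry \<omega> E y = z"
proof -
  have E: "E = insert m (E - {m})" and finE': "finite (E - {m})" using top_in fin by auto
  have card_E: "card E = Suc (card (E - {m}))" using card_Suc_Diff1[OF fin top_in] by simp
  have rank_delete: "rel_rank X v (E - {m}) = rel_rank X v E"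
    using rel_rank_insert[OF finX finE', of m v] not_coloop E by simp
  have rank_contract: "rel_rank (insert (v m) X) v (E - {m}) = rel_rank X v E - 1"
    using rel_rank_contract[OF finX finE', of m v] not_loop E by simp
  obtain y1 where y1: "y1 \<in> face_chains X v (E - {m}) i" "bdry \<omega> (E - {m}) y1 = link m z"
  proof (cases i)
    case 0
    then show ?thesis using that[of 0] link_face_chains_zero z by auto
  next
    case (Suc j)
    have "link m z \<in> face_chains X v (E - {m}) j" using link_in_face_chains z Suc by simp
    moreover have "int j \<noteq> int (card (E - {m})) - rel_rank X v (E - {m})"
      using i Suc card_E rank_delete by simp
    ultimately show ?thesis using exact_Diff[OF finX] bdry_link[OF cyc] that Suc by blast
  qed
  define w where "w = z - bdry \<omega> E (join m y1)"
  have join_y1: "join m y1 \<in> face_chains X v E (Suc i)" by (rule join_in_face_chains[OF y1(1)])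
  have w: "w \<in> face_chains X v E i"
    unfolding w_def by (rule face_chains_diff[OF z bdry_in_face_chains[OF fin join_y1]])
  have w_cyc: "bdry \<omega> E w = 0" unfolding w_def bdry_diff using cyc bdry_bdry[OF lo ED fin] by simp
  have w0: "w A = 0" if "m \<in> A" for A
  proof -
    have A: "A = insert m (A - {m})" "m \<notin> A - {m}" using that by auto
    have "bdry \<omega> E (join m y1) A = link m z (A - {m})"
      using bdry_join_through_top[OF y1(1) A(2)] A(1) y1(2) by simp
    also have "\<dots> = z A" using A by (simp add: link_def)
    finally show ?thesis by (simp add: w_def)
  qed
  obtain u where u: "u \<in> face_chains (insert (v m) X) v (E - {m}) (Suc i)" "bdry \<omega> (E - {m}) u = w"
  proof -
    have "int i \<noteq> int (card (E - {m})) - rel_rank (insert (v m) X) v (E - {m})"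
      using i card_E rank_contract by simp
    then show ?thesis
      using exact_Diff[OF _ _ face_chains_contract[OF w] bdry_contract[OF _ w_cyc]] finX w0 that
      by blast
  qed
  have u_E: "u \<in> face_chains X v E (Suc i)"
    by (rule face_chains_extend[OF u(1)]) (rule W.span_mono, use top_in in auto)
  have "bdry \<omega> E u = w"
  proof
    fix A show "bdry \<omega> E u A = w A"
      using bdry_face_chains_Diff[OF u(1)] u(2) w0 by (cases "m \<in> A") auto
  qed
  then show ?thesis
    using face_chains_add[OF join_y1 u_E] by (intro bexI[of _ "join m y1 + u"]) (simp_all add: bdry_add w_def)
qed

end

theorem cycle_is_boundary:
  assumes lo: "linear_order_on D \<omega>"
  shows "finite E \<Longrightarrow> E \<subseteq> D \<Longrightarrow> E \<noteq> {} \<Longrightarrow> finite X \<Longrightarrow>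
    int i \<noteq> int (card E) - rel_rank X v E \<Longrightarrow>
    z \<in> face_chains X v E i \<Longrightarrow> bdry \<omega> E z = 0 \<Longrightarrow>
    \<exists>y\<in>face_chains X v E (Suc i). bdry \<omega> E y = z"
proof (induction "card E" arbitrary: E X z i rule: less_induct)
  case less
  note fin = less(2) and ED = less(3) and ne = less(4) and finX = less(5) and i = less(6)
    and z = less(7) and cyc = less(8)
  obtain m where m: "m \<in> E" "\<forall>b\<in>E. (b, m) \<in> \<omega>"
    using linear_order_on_finite_has_greatest[OF lo fin ne ED] by blast
  interpret top_vertex D \<omega> E m using lo fin m by unfold_locales
  consider (loop) "v m \<in> W.span X" | (coloop) "v m \<notin> W.span (X \<union> v ` (E - {m}))"
    | (deletion_contraction) "v m \<notin> W.span X" "v m \<in> W.span (X \<union> v ` (E - {m}))"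
    by blast
  then show ?case
  proof cases
    case loop
    then show ?thesis using boundary_exists_loop z cyc by blast
  next
    case coloop
    have "i \<noteq> 0" if "E - {m} = {}"
    proof -
      have E: "E = {m}" using that m(1) by auto
      then have "rel_rank X v E = 1"
        using coloop W.dim_insert_of_finite[OF finX, of "v m"] by (simp add: rel_rank_def)
      with E show ?thesis using i by simp
    qed
    then show ?thesis using boundary_exists_coloop[OF ED coloop _ z cyc] by blast
  next
    case deletion_contraction
    have "E - {m} \<noteq> {}"
    proof
      assume "E - {m} = {}"
      with deletion_contraction show False by simp
    qed
    moreover have "card (E - {m}) < card E" using card_Diff1_less[OF fin m(1)] .
    ultimately show ?thesis
      using boundary_exists_deletion_contraction[OF ED finX deletion_contraction _ i z cyc]
        less(1) fin ED by blast
  qed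
qed

section \<open>Dimension of the homology\<close>

lemma dim_face_chains:
  assumes "finite E" "finite X"
  shows "C.dim (face_chains X v E i) = (\<Sum>A | A \<subseteq> E \<and> card A = i. W.dim (X \<union> v ` (E - A)))"
  unfolding face_chains_def using assms by (intro dim_dsum) auto

lemma face_chains_subset_finite_span:
  assumes "finite E" "finite X"
  obtains F where "finite F" "face_chains X v E i \<subseteq> C.span F"
proof
  let ?F = "\<Union>A\<in>{A. A \<subseteq> E \<and> card A = i}. single A ` (X \<union> v ` (E - A))"
  show "finite ?F" using assms by auto
  show "face_chains X v E i \<subseteq> C.span ?F"
    unfolding face_chains_def by (rule dsum_subset_span) (use assms in auto)
qed

lemma alternating_sum_telescope:
  fixes c z b :: "nat \<Rightarrow> nat"
  assumes cz: "\<And>i. c i = z i + b i" and "b 0 = 0" "b (Suc n) = 0"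
  shows "(\<Sum>i\<le>n. (-1::int) ^ i * (int (z i) - int (b (Suc i)))) = (\<Sum>i\<le>n. (-1) ^ i * int (c i))"
proof -
  have tele: "(\<Sum>i\<le>k. (-1::int) ^ i * (int (b i) + int (b (Suc i)))) = int (b 0) + (-1) ^ k * int (b (Suc k))"
    for k by (induction k) (auto simp: algebra_simps)
  have "(\<Sum>i\<le>n. (-1::int) ^ i * (int (z i) - int (b (Suc i)))) =
      (\<Sum>i\<le>n. (-1) ^ i * int (c i)) - (\<Sum>i\<le>n. (-1::int) ^ i * (int (b i) + int (b (Suc i))))"
    by (simp add: cz sum_subtractf[symmetric] algebra_simps)
  then show ?thesis using tele[of n] assms(2,3) by simp
qed

lemma sum_Pow_neg_one_pow_card:
  assumes "finite E" "E \<noteq> {}"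
  shows "(\<Sum>J\<in>Pow E. (-1::int) ^ card J) = 0"
proof -
  have "{} \<subset> E" using assms(2) by auto
  from card_subsupersets_even_odd[OF assms(1) this] show ?thesis
    by (intro sum_alternating_cancels) (auto simp: Pow_def assms(1))
qed

lemma neg_one_power_diff: "k \<le> n \<Longrightarrow> (-1::int) ^ (n - k) = (-1) ^ n * (-1) ^ k"
proof -
  assume "k \<le> n"
  then have "(-1::int) ^ n = (-1) ^ (n - k) * (-1) ^ k" by (simp flip: power_add)
  then have "(-1::int) ^ n * (-1) ^ k = (-1) ^ (n - k) * ((-1) ^ k * (-1) ^ k)" by simp
  then show ?thesis by simp
qed

lemma alternating_sum_dim_face_chains:
  assumes fin: "finite E" and ne: "E \<noteq> {}" and finX: "finite X"
  shows "(\<Sum>i\<le>card E. (-1::int) ^ i * int (C.dim (face_chains X v E i))) =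
    (-1) ^ card E * (\<Sum>J\<in>Pow E. (-1) ^ card J * rel_rank X v J)"
proof -
  define n where "n = card E"
  define dw where "dw J = int (W.dim (X \<union> v ` J))" for J
  have "(\<Sum>i\<le>n. (-1::int) ^ i * int (C.dim (face_chains X v E i))) =
      (\<Sum>i\<le>n. \<Sum>A | A \<in> Pow E \<and> card A = i. (-1::int) ^ card A * dw (E - A))"
    by (rule sum.cong[OF refl]) (simp add: dim_face_chains[OF fin finX] sum_distrib_left dw_def)
  also have "\<dots> = (\<Sum>A\<in>Pow E. (-1::int) ^ card A * dw (E - A))"
    by (rule sum.group) (use fin card_mono in \<open>auto simp: n_def\<close>)
  also have "\<dots> = (\<Sum>J\<in>Pow E. (-1::int) ^ card (E - J) * dw J)"
  proof -
    have bij: "bij_betw (\<lambda>J. E - J) (Pow E) (Pow E)"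
      by (rule bij_betw_byWitness[where f'="\<lambda>J. E - J"]) auto
    have "(\<Sum>A\<in>Pow E. (-1::int) ^ card A * dw (E - A)) =
        (\<Sum>J\<in>Pow E. (-1::int) ^ card (E - J) * dw (E - (E - J)))"
      using sum.reindex_bij_betw[OF bij, of "\<lambda>A. (-1::int) ^ card A * dw (E - A)"] by simp
    also have "\<dots> = (\<Sum>J\<in>Pow E. (-1) ^ card (E - J) * dw J)"
      by (rule sum.cong[OF refl]) (auto simp: double_diff)
    finally show ?thesis .
  qed
  also have "\<dots> = (\<Sum>J\<in>Pow E. (-1) ^ n * (int (W.dim X) * (-1) ^ card J) + (-1) ^ n * ((-1) ^ card J * rel_rank X v J))"
  proof (rule sum.cong[OF refl])
    fix J assume "J \<in> Pow E"
    then have JE: "J \<subseteq> E" by auto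
    then have "card (E - J) = n - card J" "card J \<le> n"
      using card_Diff_subset[OF finite_subset[OF JE fin] JE] card_mono[OF fin JE] by (auto simp: n_def)
    then have sign: "(-1::int) ^ card (E - J) = (-1) ^ n * (-1) ^ card J"
      by (simp add: neg_one_power_diff)
    then show "(-1::int) ^ card (E - J) * dw J =
        (-1) ^ n * (int (W.dim X) * (-1) ^ card J) + (-1) ^ n * ((-1) ^ card J * rel_rank X v J)"
      unfolding sign rel_rank_def dw_def by (simp add: algebra_simps)
  qed
  also have "\<dots> = (-1) ^ n * (\<Sum>J\<in>Pow E. (-1) ^ card J * rel_rank X v J)"
    using sum_Pow_neg_one_pow_card[OF fin ne]
    by (simp add: sum.distrib sum_distrib_left[symmetric] mult.assoc)
  finally show ?thesis by (simp add: n_def)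
qed

lemma cycles_eq_boundaries:
  assumes lo: "linear_order_on E \<omega>" and fin: "finite E" and ne: "E \<noteq> {}" and finX: "finite X"
    and i: "int i \<noteq> int (card E) - rel_rank X v E"
  shows "{x \<in> face_chains X v E i. bdry \<omega> E x = 0} = bdry \<omega> E ` face_chains X v E (Suc i)"
proof
  show "{x \<in> face_chains X v E i. bdry \<omega> E x = 0} \<subseteq> bdry \<omega> E ` face_chains X v E (Suc i)"
    using cycle_is_boundary[OF lo fin subset_refl ne finX i] by blast
  show "bdry \<omega> E ` face_chains X v E (Suc i) \<subseteq> {x \<in> face_chains X v E i. bdry \<omega> E x = 0}"
    using bdry_in_face_chains[OF fin] bdry_bdry[OF lo subset_refl fin] by auto
qed

theorem homology_dim_face_chains:
  assumes lo: "linear_order_on E \<omega>" and fin: "finite E" and ne: "E \<noteq> {}" and finX: "finite X"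
  shows "int (C.dim {x \<in> face_chains X v E i. bdry \<omega> E x = 0}) -
      int (C.dim (bdry \<omega> E ` face_chains X v E (Suc i))) =
    (if int i = int (card E) - rel_rank X v E
     then (-1) ^ nat (rel_rank X v E) * (\<Sum>J\<in>Pow E. (-1) ^ card J * rel_rank X v J) else 0)"
proof -
  define n where "n = card E"
  define r where "r = rel_rank X v E"
  have "0 \<le> r" "r \<le> int n" using rel_rank_bounds[OF finX fin, of v] by (auto simp: r_def n_def)
  define p where "p = n - nat r"
  have pn: "p \<le> n" and p: "\<And>i. int i = int n - r \<longleftrightarrow> i = p" and np: "n = p + nat r"
    using \<open>0 \<le> r\<close> \<open>r \<le> int n\<close> by (auto simp: p_def)
  define z where "z i = C.dim {x \<in> face_chains X v E i. bdry \<omega> E x = 0}" for i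
  define b where "b i = C.dim (bdry \<omega> E ` face_chains X v E i)" for i
  define h where "h i = int (z i) - int (b (Suc i))" for i
  define S where "S = (\<Sum>J\<in>Pow E. (-1) ^ card J * rel_rank X v J)"
  have cz: "C.dim (face_chains X v E i) = z i + b i" for i
  proof -
    obtain F where "finite F" "face_chains X v E i \<subseteq> C.span F"
      using face_chains_subset_finite_span[OF fin finX] by blast
    then show ?thesis unfolding z_def b_def
      by (rule CC.dim_eq_dim_kernel_add_dim_image[OF linear_bdry subspace_face_chains])
  qed
  have exact: "h i = 0" if "i \<noteq> p" for i
  proof -
    have "int i \<noteq> int (card E) - rel_rank X v E" using p that by (simp add: n_def r_def)
    then show ?thesis by (simp add: h_def z_def b_def cycles_eq_boundaries[OF lo fin ne finX])
  qed
  have "bdry \<omega> E ` face_chains X v E 0 = {0}"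
  proof
    show "bdry \<omega> E ` face_chains X v E 0 \<subseteq> {0}" using bdry_face_chains_zero[OF _ fin] by auto
    show "{0} \<subseteq> bdry \<omega> E ` face_chains X v E 0"
      using face_chains_zero by (auto intro!: image_eqI[where x=0])
  qed
  then have "b 0 = 0" by (simp add: b_def C_dim_zero)
  moreover have "face_chains X v E (Suc n) = {0}"
    using face_chains_above_card[OF fin] n_def by auto
  then have "b (Suc n) = 0" by (simp add: b_def C_dim_zero)
  ultimately have "(\<Sum>i\<le>n. (-1::int) ^ i * h i) = (\<Sum>i\<le>n. (-1) ^ i * int (C.dim (face_chains X v E i)))"
    unfolding h_def by (intro alternating_sum_telescope cz)
  also have "\<dots> = (-1) ^ n * S"
    using alternating_sum_dim_face_chains[OF fin ne finX] by (simp add: n_def S_def)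
  also have "(\<Sum>i\<le>n. (-1::int) ^ i * h i) = (-1) ^ p * h p"
  proof -
    have "(\<Sum>i\<in>{..n} - {p}. (-1::int) ^ i * h i) = 0" by (rule sum.neutral) (auto simp: exact)
    then show ?thesis using sum.remove[of "{..n}" p "\<lambda>i. (-1::int) ^ i * h i"] pn by simp
  qed
  finally have "(-1) ^ p * ((-1) ^ p * h p) = (-1) ^ p * ((-1) ^ p * ((-1) ^ nat r * S))"
    by (simp add: np power_add)
  then have "h p = (-1) ^ nat r * S" by simp
  then show ?thesis using exact p by (auto simp: h_def z_def b_def r_def n_def S_def)
qed

section \<open>The complex of the paper\<close>

lemma linear_order_on_sorted_list_exists:
  assumes lo: "linear_order_on D \<omega>"
  shows "finite B \<Longrightarrow> B \<subseteq> D \<Longrightarrow> \<exists>xs. set xs = B \<and> distinct xs \<and> sorted_wrt (\<lambda>x y. (x, y) \<in> \<omega>) xs"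
proof (induction "card B" arbitrary: B rule: less_induct)
  case less
  show ?case
  proof (cases "B = {}")
    case True
    then show ?thesis by (intro exI[of _ "[]"]) simp
  next
    case False
    obtain b where b: "b \<in> B" "\<forall>c\<in>B. (b, c) \<in> \<omega>"
      using linear_order_on_finite_has_least[OF lo less(2) False less(3)] by blast
    obtain xs where xs: "set xs = B - {b}" "distinct xs" "sorted_wrt (\<lambda>x y. (x, y) \<in> \<omega>) xs"
      using less(1)[of "B - {b}"] card_Diff1_less[OF less(2) b(1)] less(2,3) by auto
    show ?thesis by (intro exI[of _ "b # xs"]) (use xs b in auto)
  qed
qed

lemma linear_order_on_sorted_list_unique:
  assumes lo: "linear_order_on D \<omega>"
  shows "set xs = set ys \<Longrightarrow> distinct xs \<Longrightarrow> distinct ys \<Longrightarrow> sorted_wrt (\<lambda>x y. (x, y) \<in> \<omega>) xs \<Longrightarrow>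
    sorted_wrt (\<lambda>x y. (x, y) \<in> \<omega>) ys \<Longrightarrow> xs = ys"
proof (induction xs arbitrary: ys)
  case Nil
  then show ?case by simp
next
  case (Cons a as)
  then obtain b bs where ys: "ys = b # bs" by (cases ys) auto
  have "a = b \<or> (b, a) \<in> \<omega>" "a = b \<or> (a, b) \<in> \<omega>"
    using Cons.prems ys by (metis set_ConsD sorted_wrt.simps(2) list.set_intros(1))+
  then have ab: "a = b" using linear_order_on_antisymD[OF lo, of a b] by auto
  then have "set as = set bs" using Cons.prems ys by auto
  then have "as = bs" using Cons ys by auto
  then show ?case using ab ys by simp
qed

lemma inc_seq:
  assumes lo: "linear_order_on D \<omega>" and "finite B" "B \<subseteq> D"
  shows "set (inc_seq \<omega> B) = B \<and> distinct (inc_seq \<omega> B) \<and> sorted_wrt (\<lambda>x y. (x, y) \<in> \<omega>) (inc_seq \<omega> B)"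
proof -
  have "\<exists>!xs. set xs = B \<and> distinct xs \<and> sorted_wrt (\<lambda>x y. (x, y) \<in> \<omega>) xs"
    using linear_order_on_sorted_list_exists[OF lo assms(2,3)] linear_order_on_sorted_list_unique[OF lo]
    by metis
  then show ?thesis unfolding inc_seq_def by (rule theI')
qed

text \<open>Moving \<open>e\<close> into place inside a sorted list crosses exactly the smaller elements.\<close>

lemma inversions_Cons_sorted:
  assumes lo: "linear_order_on D \<omega>" and xs: "distinct xs" "sorted_wrt (\<lambda>x y. (x, y) \<in> \<omega>) xs"
    and e: "e \<notin> set xs"
  shows "inversions \<omega> (e # xs) = card {b \<in> set xs. (b, e) \<in> \<omega>}"
proof -
  let ?S = "{(i, j). i < j \<and> j < length (e # xs) \<and> ((e # xs) ! j, (e # xs) ! i) \<in> \<omega> \<and> (e # xs) ! i \<noteq> (e # xs) ! j}"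
  let ?J = "{j. j < length xs \<and> (xs ! j, e) \<in> \<omega>}"
  have S: "?S = (\<lambda>j. (0, Suc j)) ` ?J"
  proof
    show "?S \<subseteq> (\<lambda>j. (0, Suc j)) ` ?J"
    proof
      fix p assume p: "p \<in> ?S"
      obtain i j where pij: "p = (i, j)" by fastforce
      have ij: "i < j" "j < Suc (length xs)" "((e # xs) ! j, (e # xs) ! i) \<in> \<omega>" "(e # xs) ! i \<noteq> (e # xs) ! j"
        using p pij by auto
      obtain j' where j': "j = Suc j'" using ij(1) by (cases j) auto
      show "p \<in> (\<lambda>j. (0, Suc j)) ` ?J"
      proof (cases i)
        case 0
        then show ?thesis using ij j' pij by auto
      next
        case (Suc i')
        have "i' < j'" "j' < length xs" using ij j' Suc by auto
        then have "(xs ! i', xs ! j') \<in> \<omega>" using sorted_wrt_nth_less[OF xs(2)] by blast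
        moreover have "(xs ! j', xs ! i') \<in> \<omega>" "xs ! i' \<noteq> xs ! j'" using ij j' Suc by auto
        ultimately show ?thesis using linear_order_on_antisymD[OF lo] by blast
      qed
    qed
    show "(\<lambda>j. (0, Suc j)) ` ?J \<subseteq> ?S"
    proof
      fix p :: "nat \<times> nat" assume "p \<in> (\<lambda>j. (0, Suc j)) ` ?J"
      then obtain j where j: "p = (0, Suc j)" "j < length xs" "(xs ! j, e) \<in> \<omega>" by auto
      have "e \<noteq> xs ! j" using e j(2) nth_mem by metis
      then show "p \<in> ?S" using j by auto
    qed
  qed
  have "card ?S = card ?J" unfolding S by (rule card_image) (auto simp: inj_on_def)
  also have "card ?J = card (nth xs ` ?J)" by (rule card_image[symmetric], rule inj_on_nth) (use xs in auto)
  also have "nth xs ` ?J = {b \<in> set xs. (b, e) \<in> \<omega>}" by (auto simp: in_set_conv_nth)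
  finally show ?thesis by (simp add: inversions_def)
qed

lemma cpx_d_eq_bdry:
  assumes lo: "linear_order_on D \<omega>" and fin: "finite E" and ED: "E \<subseteq> D"
  shows "cpx_d \<omega> E = (bdry \<omega> E :: ('s set \<Rightarrow> 'g \<Rightarrow> 'k::field) \<Rightarrow> _)"
proof (intro ext)
  fix x :: "'s set \<Rightarrow> 'g \<Rightarrow> 'k" and A g
  show "cpx_d \<omega> E x A g = bdry \<omega> E x A g"
    unfolding cpx_d_def bdry_def
  proof (rule sum.cong[OF refl])
    fix e assume e: "e \<in> E - A"
    have "set (inc_seq \<omega> (E - insert e A)) = E - insert e A"
      "distinct (inc_seq \<omega> (E - insert e A))" "sorted_wrt (\<lambda>x y. (x, y) \<in> \<omega>) (inc_seq \<omega> (E - insert e A))"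
      using inc_seq[OF lo, of "E - insert e A"] fin ED by auto
    then have "(sort_sign \<omega> (e # inc_seq \<omega> (E - insert e A)) :: 'k) = face_sign \<omega> E e A"
      by (simp add: sort_sign_def face_sign_def inversions_Cons_sorted[OF lo])
    then show "sort_sign \<omega> (e # inc_seq \<omega> (E - insert e A)) * x (insert e A) g =
        face_sign \<omega> E e A * x (insert e A) g" by simp
  qed
qed

lemma generic_with_interval:
  assumes "generic_with S d \<alpha> Il Iu"
  shows "Il \<noteq> {}" "Il \<subseteq> Iu" "Iu \<subseteq> S"
proof -
  have fib: "fibre S d \<alpha> = {A. Il \<subseteq> A \<and> A \<subseteq> Iu}" and "\<alpha> \<in> Lambda S d"
    using assms by (auto simp: generic_with_def)
  then obtain A0 where "A0 \<subseteq> S" "A0 \<noteq> {}" "mdeg_set d A0 = \<alpha>" unfolding Lambda_def by blast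
  then have "A0 \<in> fibre S d \<alpha>" unfolding fibre_def by blast
  then show "Il \<subseteq> Iu" using fib by blast
  then have "Iu \<in> fibre S d \<alpha>" and "{} \<notin> fibre S d \<alpha>" using fib by (auto simp: fibre_def)
  then show "Iu \<subseteq> S" "Il \<noteq> {}" using fib by (auto simp: fibre_def)
qed

text \<open>With \<open>X = \<phi>(I(\<alpha>))\<close> and \<open>v = \<phi>\<close> we have \<open>V\<^bsub>I\<^sup>\<alpha> - A\<^esub> = span (X \<union> v ` (I\<^sub>\<alpha> - A))\<close>.\<close>

lemma cpx_eq_face_chains:
  fixes c :: "'g \<Rightarrow> 's \<Rightarrow> 'k::field"
  assumes "Il \<subseteq> Iu"
  shows "cpx Gb c Il Iu j = face_chains (phi_vec Gb c ` (Iu - Il)) (phi_vec Gb c) Il j"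
proof -
  have VB: "VB Gb c (Iu - A) = W.span (phi_vec Gb c ` (Iu - Il) \<union> phi_vec Gb c ` (Il - A))"
    if "A \<subseteq> Il" for A
  proof -
    have "Iu - A = (Iu - Il) \<union> (Il - A)" using that assms by auto
    then show ?thesis by (simp add: VB_def image_Un)
  qed
  have zero: "(\<lambda>g. 0) = (0 :: 'g \<Rightarrow> 'k)" by (simp add: fun_eq_iff)
  show ?thesis
    unfolding cpx_def face_chains_def dsum_def zero mem_Collect_eq
    by (rule Collect_cong) (use VB in metis)
qed

lemma rank_alpha_eq_rel_rank:
  "rank_alpha Gb c Il Iu J = rel_rank (phi_vec Gb c ` (Iu - Il)) (phi_vec Gb c) J"
  by (simp add: rank_alpha_def rel_rank_def dimW_def VB_def image_Un)

theorem corollary4p6: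
  fixes m :: nat and Gb :: "'g set" and dG :: "'g \<Rightarrow> nat \<Rightarrow> int"
    and S :: "'s set" and dS :: "'s \<Rightarrow> nat \<Rightarrow> int"
    and c :: "'g \<Rightarrow> 's \<Rightarrow> 'k::field"
    and \<alpha> :: "nat \<Rightarrow> int" and Il Iu :: "'s set" and \<omega> :: "'s rel"
  assumes pres: "min_mh_presentation m Gb dG S dS c"
    and gen: "generic_with S dS \<alpha> Il Iu"
    and ord: "linear_order_on Il \<omega>" "\<omega> \<subseteq> Il \<times> Il"
  shows "\<forall>i::nat. homology_dim Gb c Il Iu \<omega> i =
           (if int i = int (card Il) - rank_alpha Gb c Il Iu Il
            then beta_alpha Gb c Il Iu else 0)"
proof
  fix i
  note Il = generic_with_interval[OF gen]
  have "finite S" using pres by (simp add: min_mh_presentation_def)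
  then have finIu: "finite Iu" using finite_subset[OF Il(3)] by blast
  then have finIl: "finite Il" using finite_subset[OF Il(2)] by blast
  define X where "X = phi_vec Gb c ` (Iu - Il)"
  have zero: "(\<lambda>A g. 0) = (0 :: 's set \<Rightarrow> 'g \<Rightarrow> 'k)" by (simp add: fun_eq_iff)
  have "homology_dim Gb c Il Iu \<omega> i =
      int (C.dim {x \<in> face_chains X (phi_vec Gb c) Il i. bdry \<omega> Il x = 0}) -
      int (C.dim (bdry \<omega> Il ` face_chains X (phi_vec Gb c) Il (Suc i)))"
    unfolding homology_dim_def X_def cpx_eq_face_chains[OF Il(2)]
      cpx_d_eq_bdry[OF ord(1) finIl subset_refl] dimC_def zero ..
  also have "\<dots> = (if int i = int (card Il) - rel_rank X (phi_vec Gb c) Il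
      then (-1) ^ nat (rel_rank X (phi_vec Gb c) Il) *
        (\<Sum>J\<in>Pow Il. (-1) ^ card J * rel_rank X (phi_vec Gb c) J) else 0)"
    by (rule homology_dim_face_chains[OF ord(1) finIl Il(1)]) (simp add: X_def finIu)
  finally show "homology_dim Gb c Il Iu \<omega> i =
      (if int i = int (card Il) - rank_alpha Gb c Il Iu Il then beta_alpha Gb c Il Iu else 0)"
    by (simp add: beta_alpha_def rank_alpha_eq_rel_rank X_def)
qed

end
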